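(* Let $n,d$ be positive integers with $d$ dividing $n$, let $C_n=\langle a\mid a^n=e\rangle$, let $l$ be an integer, and let $\Delta=\{a^{jn/d+l}: j=0,\dots,d-1\}$. For complex numbers $W_0,\dots,W_{d-1}$, the operator $W=\sum_{j=0}^{d-1}W_jU_{a^{jn/d+l}}$ on $\ell^2(C_n)$ is unitary if and only if there exist real numbers $\theta_0,\dots,\theta_{d-1}$ such that $W_j=\frac1d\sum_{k=0}^{d-1}e^{i\theta_k}e^{2\pi i kj/d}$ for all $j=0,\dots,d-1$.
   Context: For a group $\Gamma$, let $\ell^2(\Gamma)$ have orthonormal basis $\{|g\rangle\}_{g\in\Gamma}$ and for $\delta\in\Gamma$ let $U_\delta$ be the unitary with $U_\delta|g\rangle=|g\delta\rangle$. Such a unitary $W$ with all $W_j$ nonzero is a homogeneous scalar quantum walk on the Cayley graph $C_\Delta(C_n)$ (vertex set $C_n$, directed edges $(g,g\delta)$ for $\delta\in\Delta$). *)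

theory Defs
  imports "HOL-Analysis.Analysis"
begin

text \<open>The cyclic group C_n = <a | a^n = e> is represented by exponents {0..<n},
  a^i a^j = a^((i+j) mod n).  The Hilbert space l^2(C_n) has orthonormal basis
  |g>, g < n; a linear operator on it is given by its matrix entries
  M h g = <h| M |g> for h, g < n.\<close>

definition shift_op :: "nat \<Rightarrow> int \<Rightarrow> nat \<Rightarrow> nat \<Rightarrow> complex" where
  "shift_op n s h g = (if int h = (int g + s) mod int n then 1 else 0)"

definition walk_op :: "nat \<Rightarrow> nat \<Rightarrow> int \<Rightarrow> (nat \<Rightarrow> complex) \<Rightarrow> nat \<Rightarrow> nat \<Rightarrow> complex" where
  "walk_op n d l W h g = (\<Sum>j<d. W j * shift_op n (int (j * (n div d)) + l) h g)"

definition unitary_op :: "nat \<Rightarrow> (nat \<Rightarrow> nat \<Rightarrow> complex) \<Rightarrow> bool" where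
  "unitary_op n M \<longleftrightarrow>
     (\<forall>g<n. \<forall>g'<n. (\<Sum>h<n. cnj (M h g) * M h g') = (if g = g' then 1 else 0)) \<and>
     (\<forall>h<n. \<forall>h'<n. (\<Sum>g<n. M h g * cnj (M h' g)) = (if h = h' then 1 else 0))"

end

theory Submission
  imports Defs
begin

text \<open>Both Gram matrices of W are circulant, and since the steps a^(jm+l) (m = n/d) differ only by
  multiples of m, their entry at offset x vanishes unless m divides x, in which case it is the
  cyclic autocorrelation of (W_0, ..., W_(d-1)) at x/m; the common shift l cancels. So W is
  unitary iff this autocorrelation is the delta function on Z/d. Its discrete Fourier transform
  is |dft W|^2, hence this happens iff every Fourier coefficient of W has modulus one, i.e. is
  some e^(i theta_k); Fourier inversion then gives the stated formula.\<close>

definition unity_root :: "nat \<Rightarrow> int \<Rightarrow> complex" where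
  "unity_root d x = exp (2 * of_real pi * \<i> * of_int x / of_nat d)"

lemma unity_root_add: "unity_root d (a + b) = unity_root d a * unity_root d b"
  unfolding unity_root_def by (simp add: exp_add[symmetric] add_divide_distrib algebra_simps)

lemma cnj_unity_root: "cnj (unity_root d a) = unity_root d (- a)"
  unfolding unity_root_def by (simp add: exp_cnj)

lemma unity_root_of_nat_mult: "unity_root d (int k * a) = unity_root d a ^ k"
  unfolding unity_root_def by (simp add: exp_of_nat_mult[symmetric] algebra_simps)

lemma unity_root_of_nat_product:
  "unity_root d (int k * int j) = exp (2 * of_real pi * \<i> * of_nat k * of_nat j / of_nat d)"
  by (simp add: unity_root_def mult.assoc)

lemma unity_root_eq_1_iff:
  assumes "0 < d"
  shows "unity_root d a = 1 \<longleftrightarrow> int d dvd a"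
proof
  assume "unity_root d a = 1"
  then obtain q :: int where "2 * pi * of_int a / of_nat d = of_int (2 * q) * pi"
    unfolding unity_root_def exp_eq_1 by auto
  then have "of_int a = real d * of_int q"
    using assms by (simp add: field_simps)
  then have "a = int d * q"
    by (metis of_int_eq_iff of_int_mult of_int_of_nat_eq)
  then show "int d dvd a" by simp
next
  assume "int d dvd a"
  then obtain q where "a = int d * q" by auto
  then show "unity_root d a = 1"
    unfolding unity_root_def exp_eq_1 using assms
    by (intro conjI exI[of _ q]) (simp_all add: field_simps)
qed

lemma sum_unity_root_powers:
  assumes "0 < d"
  shows "(\<Sum>k<d. unity_root d (int k * x)) = (if int d dvd x then of_nat d else 0)"
proof (cases "int d dvd x")
  case True
  then have "unity_root d (int k * x) = 1" for k
    using assms by (simp add: unity_root_eq_1_iff)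
  then show ?thesis
    using True by simp
next
  case False
  then have "unity_root d x \<noteq> 1"
    using assms by (simp add: unity_root_eq_1_iff)
  moreover have "unity_root d x ^ d = 1"
    using assms by (simp add: unity_root_of_nat_mult[symmetric] unity_root_eq_1_iff)
  ultimately show ?thesis
    using False by (simp add: unity_root_of_nat_mult sum_gp_strict)
qed

lemma int_dvd_diff_iff_eq:
  assumes "k < d" "r < d"
  shows "int d dvd int k - int r \<longleftrightarrow> k = r"
proof
  assume "int d dvd int k - int r"
  then have "int k mod int d = int r mod int d"
    by (simp add: mod_eq_dvd_iff)
  then show "k = r"
    using assms by simp
qed simp

lemma unity_root_orthogonal:
  assumes "0 < d" "k < d" "r < d"
  shows "(\<Sum>t<d. unity_root d (int k * int t) * unity_root d (- (int r * int t))) =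
    (if k = r then of_nat d else 0)"
proof -
  have "(\<Sum>t<d. unity_root d (int k * int t) * unity_root d (- (int r * int t))) =
      (\<Sum>t<d. unity_root d (int t * (int k - int r)))"
    by (simp add: unity_root_add[symmetric] algebra_simps)
  then show ?thesis
    using assms by (simp add: sum_unity_root_powers int_dvd_diff_iff_eq)
qed

definition dft :: "nat \<Rightarrow> (nat \<Rightarrow> complex) \<Rightarrow> nat \<Rightarrow> complex" where
  "dft d W r = (\<Sum>j<d. W j * unity_root d (- (int r * int j)))"

definition idft :: "nat \<Rightarrow> (nat \<Rightarrow> complex) \<Rightarrow> int \<Rightarrow> complex" where
  "idft d u t = (1 / of_nat d) * (\<Sum>k<d. u k * unity_root d (int k * t))"

lemma dft_cong: "(\<And>j. j < d \<Longrightarrow> W j = V j) \<Longrightarrow> dft d W r = dft d V r"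
  unfolding dft_def by (intro sum.cong) simp_all

lemma idft_cong: "(\<And>k. k < d \<Longrightarrow> u k = v k) \<Longrightarrow> idft d u t = idft d v t"
  unfolding idft_def by (intro arg_cong[where f = "(*) _"] sum.cong) simp_all

lemma dft_idft:
  assumes "0 < d" "r < d"
  shows "dft d (\<lambda>j. idft d u (int j)) r = u r"
proof -
  have "dft d (\<lambda>j. idft d u (int j)) r = (1 / of_nat d) * (\<Sum>k<d. u k *
      (\<Sum>j<d. unity_root d (int k * int j) * unity_root d (- (int r * int j))))"
    unfolding dft_def idft_def sum_distrib_right sum_distrib_left
    by (subst sum.swap) (simp add: mult_ac)
  also have "\<dots> = (1 / of_nat d) * (\<Sum>k<d. if k = r then u k * of_nat d else 0)"
    using assms by (intro arg_cong[where f = "(*) _"] sum.cong) (auto simp: unity_root_orthogonal)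
  also have "\<dots> = u r"
    using assms by simp
  finally show ?thesis .
qed

lemma idft_dft:
  assumes "0 < d" "j < d"
  shows "idft d (dft d W) (int j) = W j"
proof -
  have "(\<Sum>k<d. dft d W k * unity_root d (int k * int j)) =
      (\<Sum>j'<d. W j' * (\<Sum>k<d. unity_root d (int j * int k) * unity_root d (- (int j' * int k))))"
    unfolding dft_def sum_distrib_right sum_distrib_left
    by (subst sum.swap) (simp add: mult_ac)
  also have "\<dots> = (\<Sum>j'<d. if j' = j then W j' * of_nat d else 0)"
    using assms by (intro sum.cong) (auto simp: unity_root_orthogonal)
  also have "\<dots> = W j * of_nat d"
    using assms by simp
  finally show ?thesis
    using assms by (simp add: idft_def)
qed

definition autocorr :: "nat \<Rightarrow> (nat \<Rightarrow> complex) \<Rightarrow> int \<Rightarrow> complex" where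
  "autocorr d W t =
    (\<Sum>j<d. \<Sum>j'<d. cnj (W j) * W j' * (if int d dvd t + int j - int j' then 1 else 0))"

lemma autocorr_mod: "autocorr d W (t mod int d) = autocorr d W t"
proof -
  have "int d dvd t mod int d + a \<longleftrightarrow> int d dvd t + a" for a
    by (simp add: dvd_eq_mod_eq_0 mod_add_left_eq)
  then show ?thesis
    unfolding autocorr_def by (simp add: add_diff_eq[symmetric])
qed

lemma autocorr_eq_idft:
  assumes "0 < d"
  shows "autocorr d W t = idft d (\<lambda>r. of_real ((norm (dft d W r))\<^sup>2)) t"
proof -
  have indicator: "(if int d dvd y then 1 else 0) = (1 / of_nat d) * (\<Sum>r<d. unity_root d (int r * y))"
    for y using assms by (simp add: sum_unity_root_powers)
  have split: "unity_root d (int r * (t + int j - int j')) =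
      unity_root d (int r * t) * unity_root d (int r * int j) * unity_root d (- (int r * int j'))"
    for r j j' by (simp add: unity_root_add[symmetric] algebra_simps)
  have "autocorr d W t = (1 / of_nat d) * (\<Sum>j<d. \<Sum>j'<d. \<Sum>r<d. unity_root d (int r * t) *
      ((cnj (W j) * unity_root d (int r * int j)) * (W j' * unity_root d (- (int r * int j')))))"
    unfolding autocorr_def indicator split sum_distrib_left by (simp add: mult_ac)
  also have "\<dots> = (1 / of_nat d) * (\<Sum>r<d. \<Sum>j<d. \<Sum>j'<d. unity_root d (int r * t) *
      ((cnj (W j) * unity_root d (int r * int j)) * (W j' * unity_root d (- (int r * int j')))))"
    by (subst sum.swap, subst sum.swap) (rule refl)
  also have "\<dots> = (1 / of_nat d) * (\<Sum>r<d. unity_root d (int r * t) *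
      ((\<Sum>j<d. cnj (W j) * unity_root d (int r * int j)) *
       (\<Sum>j'<d. W j' * unity_root d (- (int r * int j')))))"
    unfolding sum_product by (simp only: sum_distrib_left)
  also have "\<dots> = (1 / of_nat d) * (\<Sum>r<d. unity_root d (int r * t) * (cnj (dft d W r) * dft d W r))"
    by (simp add: dft_def cnj_sum cnj_unity_root)
  finally show ?thesis
    unfolding idft_def complex_norm_square by (simp add: mult.commute)
qed

lemma autocorr_delta_iff_norm_dft:
  assumes "0 < d"
  shows "(\<forall>t. autocorr d W t = (if int d dvd t then 1 else 0)) \<longleftrightarrow> (\<forall>r<d. norm (dft d W r) = 1)"
proof
  assume delta: "\<forall>t. autocorr d W t = (if int d dvd t then 1 else 0)"
  show "\<forall>r<d. norm (dft d W r) = 1"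
  proof (intro allI impI)
    fix r assume r: "r < d"
    have "dft d (\<lambda>j. autocorr d W (int j)) r = of_real ((norm (dft d W r))\<^sup>2)"
      unfolding autocorr_eq_idft[OF assms] by (rule dft_idft[OF assms r])
    moreover have "dft d (\<lambda>j. autocorr d W (int j)) r = (\<Sum>j<d. if j = 0 then 1 else 0)"
      unfolding dft_def using delta int_dvd_diff_iff_eq[OF _ assms]
      by (intro sum.cong) (auto simp: unity_root_def)
    ultimately have "of_real ((norm (dft d W r))\<^sup>2) = (1 :: complex)"
      using assms by simp
    then have "(norm (dft d W r))\<^sup>2 = 1"
      by (rule of_real_eq_1_iff[THEN iffD1])
    then show "norm (dft d W r) = 1"
      using norm_ge_zero[of "dft d W r"] by (auto simp: power2_eq_1_iff)
  qed
next
  assume unimodular: "\<forall>r<d. norm (dft d W r) = 1"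
  show "\<forall>t. autocorr d W t = (if int d dvd t then 1 else 0)"
  proof
    fix t
    have "autocorr d W t = idft d (\<lambda>r. 1) t"
      unfolding autocorr_eq_idft[OF assms] using unimodular by (intro idft_cong) simp
    then have "autocorr d W t = (1 / of_nat d) * (\<Sum>r<d. unity_root d (int r * t))"
      by (simp add: idft_def)
    then show "autocorr d W t = (if int d dvd t then 1 else 0)"
      using assms by (simp add: sum_unity_root_powers)
  qed
qed

lemma norm_dft_iff_phases:
  assumes "0 < d"
  shows "(\<forall>r<d. norm (dft d W r) = 1) \<longleftrightarrow>
    (\<exists>\<theta> :: nat \<Rightarrow> real. \<forall>j<d. W j = idft d (\<lambda>k. exp (\<i> * of_real (\<theta> k))) (int j))"
proof
  assume unimodular: "\<forall>r<d. norm (dft d W r) = 1"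
  have phase: "exp (\<i> * of_real (Arg (dft d W k))) = dft d W k" if "k < d" for k
  proof -
    have "dft d W k \<noteq> 0" "norm (dft d W k) = 1"
      using unimodular that by auto
    then show ?thesis
      by (simp add: cis_conv_exp[symmetric] cis_Arg sgn_div_norm)
  qed
  have "idft d (\<lambda>k. exp (\<i> * of_real (Arg (dft d W k)))) (int j) = W j" if "j < d" for j
  proof -
    have "idft d (\<lambda>k. exp (\<i> * of_real (Arg (dft d W k)))) (int j) = idft d (dft d W) (int j)"
      by (rule idft_cong) (rule phase)
    also have "\<dots> = W j"
      by (rule idft_dft[OF assms that])
    finally show ?thesis .
  qed
  then show "\<exists>\<theta> :: nat \<Rightarrow> real. \<forall>j<d. W j = idft d (\<lambda>k. exp (\<i> * of_real (\<theta> k))) (int j)"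
    by (intro exI[of _ "\<lambda>k. Arg (dft d W k)"]) simp
next
  assume "\<exists>\<theta> :: nat \<Rightarrow> real. \<forall>j<d. W j = idft d (\<lambda>k. exp (\<i> * of_real (\<theta> k))) (int j)"
  then obtain \<theta> :: "nat \<Rightarrow> real"
    where W: "\<forall>j<d. W j = idft d (\<lambda>k. exp (\<i> * of_real (\<theta> k))) (int j)"
    by blast
  have "dft d W r = exp (\<i> * of_real (\<theta> r))" if "r < d" for r
  proof -
    have "dft d W r = dft d (\<lambda>j. idft d (\<lambda>k. exp (\<i> * of_real (\<theta> k))) (int j)) r"
      using W by (intro dft_cong) simp
    also have "\<dots> = exp (\<i> * of_real (\<theta> r))"
      by (rule dft_idft[OF assms that])
    finally show ?thesis .
  qed
  then show "\<forall>r<d. norm (dft d W r) = 1"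
    by simp
qed

lemma cnj_shift_op: "cnj (shift_op n s h g) = shift_op n s h g"
  unfolding shift_op_def by simp

lemma sum_shift_op_left:
  assumes "0 < n"
  shows "(\<Sum>h<n. shift_op n s h g * f h) = f (nat ((int g + s) mod int n))"
proof -
  let ?c = "(int g + s) mod int n"
  have "(\<Sum>h<n. shift_op n s h g * f h) = (\<Sum>h<n. if h = nat ?c then f h else 0)"
    unfolding shift_op_def using assms by (intro sum.cong) auto
  also have "\<dots> = f (nat ?c)"
    using assms by (simp add: nat_less_iff)
  finally show ?thesis .
qed

lemma sum_shift_op_right:
  assumes "h < n"
  shows "(\<Sum>g<n. shift_op n s h g * f g) = f (nat ((int h - s) mod int n))"
proof -
  let ?c = "(int h - s) mod int n"
  have "int h = (int g + s) mod int n \<longleftrightarrow> g = nat ?c" if "g < n" for g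
  proof -
    have "int h = (int g + s) mod int n \<longleftrightarrow> int h mod int n = (int g + s) mod int n"
      using assms by simp
    also have "\<dots> \<longleftrightarrow> int g mod int n = (int h - s) mod int n"
      unfolding mod_eq_dvd_iff by (metis dvd_diff_commute diff_diff_eq2 diff_diff_eq add.commute)
    also have "\<dots> \<longleftrightarrow> int g = ?c"
      using that by simp
    also have "\<dots> \<longleftrightarrow> g = nat ?c"
      using assms by auto
    finally show ?thesis .
  qed
  then have "(\<Sum>g<n. shift_op n s h g * f g) = (\<Sum>g<n. if g = nat ?c then f g else 0)"
    unfolding shift_op_def by (intro sum.cong) auto
  also have "\<dots> = f (nat ?c)"
    using assms by (simp add: nat_less_iff)
  finally show ?thesis .
qed

lemma sum_shift_op_cols:
  assumes "0 < n"
  shows "(\<Sum>h<n. shift_op n s h g * shift_op n s' h g') =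
    (if int n dvd (int g + s) - (int g' + s') then 1 else 0)"
  unfolding sum_shift_op_left[OF assms] using assms by (simp add: shift_op_def mod_eq_dvd_iff)

lemma sum_shift_op_rows:
  assumes "h < n" "h' < n"
  shows "(\<Sum>g<n. shift_op n s h g * shift_op n s' h' g) =
    (if int n dvd (int h - s) - (int h' - s') then 1 else 0)"
proof -
  have "int h' = ((int h - s) mod int n + s') mod int n \<longleftrightarrow>
      int h' mod int n = (int h - s + s') mod int n"
    using assms by (simp add: mod_add_left_eq)
  also have "\<dots> \<longleftrightarrow> int n dvd (int h - s) - (int h' - s')"
    by (metis diff_diff_eq2 mod_eq_dvd_iff)
  finally show ?thesis
    unfolding sum_shift_op_right[OF assms(1)] using assms by (simp add: shift_op_def)
qed

text \<open>The autocorrelation on Z/(dm) of the sequence carrying W_j at position jm and vanishing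
  elsewhere.\<close>

definition strided_autocorr :: "nat \<Rightarrow> nat \<Rightarrow> (nat \<Rightarrow> complex) \<Rightarrow> int \<Rightarrow> complex" where
  "strided_autocorr m d W x = (if int m dvd x then autocorr d W (x div int m) else 0)"

lemma strided_autocorr_eq:
  assumes "0 < m"
  shows "(\<Sum>j<d. \<Sum>j'<d. cnj (W j) * W j' *
      (if int (d * m) dvd x + int (j * m) - int (j' * m) then 1 else 0)) = strided_autocorr m d W x"
proof -
  have offset: "x + int (j * m) - int (j' * m) = x + (int j - int j') * int m" for j j'
    by (simp add: algebra_simps)
  show ?thesis
  proof (cases "int m dvd x")
    case True
    then obtain q where x: "x = q * int m"
      by (metis dvd_def mult.commute)
    then have "x div int m = q"
      using assms by simp
    have "x + (int j - int j') * int m = (q + int j - int j') * int m" for j j'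
      unfolding x by (simp add: algebra_simps)
    then have "int (d * m) dvd x + int (j * m) - int (j' * m) \<longleftrightarrow> int d dvd q + int j - int j'"
      for j j' using assms unfolding offset unfolding of_nat_mult by simp
    then show ?thesis
      unfolding strided_autocorr_def autocorr_def \<open>x div int m = q\<close> using True by simp
  next
    case False
    have "\<not> int (d * m) dvd x + int (j * m) - int (j' * m)" for j j'
    proof
      assume "int (d * m) dvd x + int (j * m) - int (j' * m)"
      then have "int m dvd x + (int j - int j') * int m"
        unfolding offset unfolding of_nat_mult by (rule dvd_mult_right)
      then show False
        using False by (simp add: dvd_add_left_iff)
    qed
    then show ?thesis
      using False by (simp add: strided_autocorr_def)
  qed
qed

lemma walk_op_gram_cols:
  assumes n: "n = d * m" "0 < n"
  shows "(\<Sum>h<n. cnj (walk_op n d l W h g) * walk_op n d l W h g') =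
    strided_autocorr m d W (int g - int g')"
proof -
  have "n div d = m" "0 < m"
    using n by auto
  let ?s = "\<lambda>j. int (j * m) + l"
  have "(\<Sum>h<n. cnj (walk_op n d l W h g) * walk_op n d l W h g') =
      (\<Sum>h<n. \<Sum>j<d. \<Sum>j'<d. (cnj (W j) * shift_op n (?s j) h g) * (W j' * shift_op n (?s j') h g'))"
    unfolding walk_op_def \<open>n div d = m\<close> cnj_sum complex_cnj_mult cnj_shift_op sum_product ..
  also have "\<dots> = (\<Sum>j<d. \<Sum>j'<d. \<Sum>h<n.
      (cnj (W j) * shift_op n (?s j) h g) * (W j' * shift_op n (?s j') h g'))"
    by (rule trans[OF sum.swap sum.cong[OF refl sum.swap]])
  also have "\<dots> = (\<Sum>j<d. \<Sum>j'<d.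
      cnj (W j) * W j' * (\<Sum>h<n. shift_op n (?s j) h g * shift_op n (?s j') h g'))"
    by (simp add: sum_distrib_left mult_ac)
  also have "\<dots> = (\<Sum>j<d. \<Sum>j'<d. cnj (W j) * W j' *
      (if int n dvd (int g - int g') + int (j * m) - int (j' * m) then 1 else 0))"
    using n by (simp add: sum_shift_op_cols algebra_simps)
  also have "\<dots> = strided_autocorr m d W (int g - int g')"
    unfolding n(1) by (rule strided_autocorr_eq[OF \<open>0 < m\<close>])
  finally show ?thesis .
qed

lemma walk_op_gram_rows:
  assumes n: "n = d * m" "0 < n" and h: "h < n" "h' < n"
  shows "(\<Sum>g<n. walk_op n d l W h g * cnj (walk_op n d l W h' g)) =
    strided_autocorr m d W (int h - int h')"
proof -
  have "n div d = m" "0 < m"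
    using n by auto
  let ?s = "\<lambda>j. int (j * m) + l"
  have "(\<Sum>g<n. walk_op n d l W h g * cnj (walk_op n d l W h' g)) =
      (\<Sum>g<n. \<Sum>j<d. \<Sum>j'<d. (W j * shift_op n (?s j) h g) * (cnj (W j') * shift_op n (?s j') h' g))"
    unfolding walk_op_def \<open>n div d = m\<close> cnj_sum complex_cnj_mult cnj_shift_op sum_product ..
  also have "\<dots> = (\<Sum>j<d. \<Sum>j'<d. \<Sum>g<n.
      (W j * shift_op n (?s j) h g) * (cnj (W j') * shift_op n (?s j') h' g))"
    by (rule trans[OF sum.swap sum.cong[OF refl sum.swap]])
  also have "\<dots> = (\<Sum>j<d. \<Sum>j'<d.
      cnj (W j') * W j * (\<Sum>g<n. shift_op n (?s j) h g * shift_op n (?s j') h' g))"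
    by (simp add: sum_distrib_left mult_ac)
  also have "\<dots> = (\<Sum>j<d. \<Sum>j'<d. cnj (W j') * W j *
      (if int n dvd (int h - int h') + int (j' * m) - int (j * m) then 1 else 0))"
    using h by (simp add: sum_shift_op_rows algebra_simps)
  also have "\<dots> = (\<Sum>j'<d. \<Sum>j<d. cnj (W j') * W j *
      (if int n dvd (int h - int h') + int (j' * m) - int (j * m) then 1 else 0))"
    by (rule sum.swap)
  also have "\<dots> = strided_autocorr m d W (int h - int h')"
    unfolding n(1) by (rule strided_autocorr_eq[OF \<open>0 < m\<close>])
  finally show ?thesis .
qed

lemma strided_autocorr_delta_iff:
  assumes "0 < d" "0 < m"
  shows "(\<forall>g<d * m. \<forall>g'<d * m. strided_autocorr m d W (int g - int g') = (if g = g' then 1 else 0)) \<longleftrightarrow>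
    (\<forall>t. autocorr d W t = (if int d dvd t then 1 else 0))"
proof
  assume delta: "\<forall>g<d * m. \<forall>g'<d * m. strided_autocorr m d W (int g - int g') = (if g = g' then 1 else 0)"
  show "\<forall>t. autocorr d W t = (if int d dvd t then 1 else 0)"
  proof
    fix t
    define r where "r = nat (t mod int d)"
    have r: "int r = t mod int d" "r < d"
      using assms unfolding r_def by (auto simp: nat_less_iff)
    have "r * m < d * m" "0 < d * m"
      using assms r(2) by simp_all
    then have "strided_autocorr m d W (int (r * m) - int 0) = (if r * m = 0 then 1 else 0)"
      using delta by blast
    moreover have "strided_autocorr m d W (int (r * m) - int 0) = autocorr d W t"
      using assms r(1) by (simp add: strided_autocorr_def autocorr_mod)
    moreover have "int d dvd t \<longleftrightarrow> r = 0"
      using r(1) by (auto simp: dvd_eq_mod_eq_0)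
    ultimately show "autocorr d W t = (if int d dvd t then 1 else 0)"
      using assms(2) by simp
  qed
next
  assume delta: "\<forall>t. autocorr d W t = (if int d dvd t then 1 else 0)"
  show "\<forall>g<d * m. \<forall>g'<d * m. strided_autocorr m d W (int g - int g') = (if g = g' then 1 else 0)"
  proof (intro allI impI)
    fix g g' assume g: "g < d * m" "g' < d * m"
    show "strided_autocorr m d W (int g - int g') = (if g = g' then 1 else 0)"
    proof (cases "int m dvd int g - int g'")
      case True
      then obtain q where q: "int g - int g' = int m * q" ..
      have "int d dvd q \<longleftrightarrow> int (d * m) dvd int g - int g'"
        using q assms by simp
      also have "\<dots> \<longleftrightarrow> g = g'"
        using g by (rule int_dvd_diff_iff_eq)
      finally show ?thesis
        using True q assms delta by (simp add: strided_autocorr_def)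
    next
      case False
      then show ?thesis
        by (auto simp: strided_autocorr_def)
    qed
  qed
qed

lemma unitary_walk_op_iff_autocorr:
  assumes "0 < n" "d dvd n"
  shows "unitary_op n (walk_op n d l W) \<longleftrightarrow> (\<forall>t. autocorr d W t = (if int d dvd t then 1 else 0))"
proof -
  obtain m where n: "n = d * m"
    using assms(2) ..
  then have "0 < d" "0 < m"
    using assms(1) by auto
  have "unitary_op n (walk_op n d l W) \<longleftrightarrow>
      (\<forall>g<n. \<forall>g'<n. strided_autocorr m d W (int g - int g') = (if g = g' then 1 else 0))"
    unfolding unitary_op_def using n assms(1) by (simp add: walk_op_gram_cols walk_op_gram_rows)
  also have "\<dots> \<longleftrightarrow> (\<forall>t. autocorr d W t = (if int d dvd t then 1 else 0))"
    unfolding n by (rule strided_autocorr_delta_iff[OF \<open>0 < d\<close> \<open>0 < m\<close>])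
  finally show ?thesis .
qed

theorem mainTheorem10:
  fixes n d :: nat and l :: int and W :: "nat \<Rightarrow> complex"
  assumes "0 < n" and "0 < d" and "d dvd n"
  shows "unitary_op n (walk_op n d l W) \<longleftrightarrow>
    (\<exists>\<theta> :: nat \<Rightarrow> real. \<forall>j<d.
       W j = (1 / of_nat d) * (\<Sum>k<d. exp (\<i> * of_real (\<theta> k)) *
                 exp (2 * of_real pi * \<i> * of_nat k * of_nat j / of_nat d)))"
proof -
  have "unitary_op n (walk_op n d l W) \<longleftrightarrow> (\<forall>t. autocorr d W t = (if int d dvd t then 1 else 0))"
    using assms(1,3) by (rule unitary_walk_op_iff_autocorr)
  also have "\<dots> \<longleftrightarrow> (\<forall>r<d. norm (dft d W r) = 1)"
    using assms(2) by (rule autocorr_delta_iff_norm_dft)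
  also have "\<dots> \<longleftrightarrow>
      (\<exists>\<theta> :: nat \<Rightarrow> real. \<forall>j<d. W j = idft d (\<lambda>k. exp (\<i> * of_real (\<theta> k))) (int j))"
    using assms(2) by (rule norm_dft_iff_phases)
  finally show ?thesis
    unfolding idft_def unity_root_of_nat_product .
qed

end
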